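(* Let training data $(\mathbf{x}_1,y_1),\dots,(\mathbf{x}_n,y_n)$ satisfy: $\|\mathbf{x}_i\|_2\le1$ for all $i$, and for each $i\ne j$, $\mathbf{x}_i\ne\beta\mathbf{x}_j$ for all $\beta\in\mathbb{R}\setminus\{0\}$. Then, for any $\alpha>0$, the matrices $\mathbf{V}^\infty$ and $\mathbf{G}^\infty$ are strictly positive definite.
   Context: For $\mathbf{u}\ne0$: $\mathbf{x}^{\mathbf{u}}=\mathbf{u}\mathbf{u}^\top\mathbf{x}/\|\mathbf{u}\|_2^2$, $\mathbf{x}^{\mathbf{u}^\perp}=\mathbf{x}-\mathbf{x}^{\mathbf{u}}$. Define the $n\times n$ matrices $\mathbf{V}^\infty_{ij}=\mathbb{E}_{\mathbf{v}\sim N(0,\alpha^2\mathbf{I})}\langle\mathbf{x}_i^{\mathbf{v}^\perp},\mathbf{x}_j^{\mathbf{v}^\perp}\rangle\mathbb{1}\{\mathbf{v}^\top\mathbf{x}_i\ge0\}\mathbb{1}\{\mathbf{v}^\top\mathbf{x}_j\ge0\}$ and $\mathbf{G}^\infty_{ij}=\mathbb{E}_{\mathbf{v}\sim N(0,\alpha^2\mathbf{I})}\langle\mathbf{x}_i^{\mathbf{v}},\mathbf{x}_j^{\mathbf{v}}\rangle\mathbb{1}\{\mathbf{v}^\top\mathbf{x}_i\ge0\}\mathbb{1}\{\mathbf{v}^\top\mathbf{x}_j\ge0\}$. (Their least eigenvalues are denoted $\lambda_0$ and $\mu_0$.) *)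

theory Defs
  imports "HOL-Probability.Probability"
begin

definition gaussian_vec :: "real \<Rightarrow> (real ^ 'd) measure" where
  "gaussian_vec \<alpha> = density lborel (\<lambda>v. ennreal (\<Prod>k\<in>UNIV. normal_density 0 \<alpha> (v $ k)))"

text \<open>Projection of x onto the direction u (x^u) and onto its orthogonal complement.
  For u = 0 this gives 0 (division by zero); that is a null set under the Gaussian.\<close>
definition proj_on :: "real ^ 'd \<Rightarrow> real ^ 'd \<Rightarrow> real ^ 'd" where
  "proj_on u x = ((u \<bullet> x) / (norm u)\<^sup>2) *\<^sub>R u"

definition proj_perp :: "real ^ 'd \<Rightarrow> real ^ 'd \<Rightarrow> real ^ 'd" where
  "proj_perp u x = x - proj_on u x"

definition ind :: "bool \<Rightarrow> real" where
  "ind b = (if b then 1 else 0)"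

definition V_inf :: "real \<Rightarrow> ('n \<Rightarrow> real ^ 'd) \<Rightarrow> real ^ 'n ^ 'n" where
  "V_inf \<alpha> x = (\<chi> i j. \<integral>v. (proj_perp v (x i) \<bullet> proj_perp v (x j))
       * ind (v \<bullet> x i \<ge> 0) * ind (v \<bullet> x j \<ge> 0) \<partial>(gaussian_vec \<alpha>))"

definition G_inf :: "real \<Rightarrow> ('n \<Rightarrow> real ^ 'd) \<Rightarrow> real ^ 'n ^ 'n" where
  "G_inf \<alpha> x = (\<chi> i j. \<integral>v. (proj_on v (x i) \<bullet> proj_on v (x j))
       * ind (v \<bullet> x i \<ge> 0) * ind (v \<bullet> x j \<ge> 0) \<partial>(gaussian_vec \<alpha>))"

definition strictly_pos_def :: "real ^ 'n ^ 'n \<Rightarrow> bool" where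
  "strictly_pos_def M \<longleftrightarrow> transpose M = M \<and> (\<forall>c. c \<noteq> 0 \<longrightarrow> c \<bullet> (M *v c) > 0)"

end

(*
  For c \<noteq> 0 the quadratic form c \<bullet> (M *v c) of either matrix is the Gaussian expectation of
  |F(v)|^2, where F(v) = \<Sum>i. c_i 1{v \<bullet> x_i \<ge> 0} P_v x_i and P_v is the projection onto v
  (for G) or onto its orthogonal complement (for V). The Gaussian has a positive density, so it
  suffices that F is nonzero on a nonempty open set.

  Choose i with c_i \<noteq> 0 and a point v0 of the hyperplane x_i\<^sup>\<bottom> lying on no other x_j\<^sup>\<bottom>; this
  is possible because no x_j is parallel to x_i. Near v0 only the i-th indicator changes, and
  crossing the hyperplane switches on the term c_i P_v x_i. For the orthogonal projection this
  term tends to c_i x_i \<noteq> 0 at v0, so by continuity F is nonzero near v0 on one of the two sides.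
  For the projection onto v, F(v) \<bullet> v is a linear function of v on each side, and the two
  coefficient vectors differ by c_i x_i, so one of them is nonzero, and F(v) \<bullet> v \<noteq> 0 on an
  open subset of that side.
*)

theory Submission
  imports Defs
begin

section \<open>Projections and the Gaussian measure\<close>

lemma norm_proj_on_le: "norm (proj_on v y) \<le> norm y"
proof (cases "v = 0")
  case True
  then show ?thesis by (simp add: proj_on_def)
next
  case False
  then have nv: "norm v > 0" by simp
  have "norm (proj_on v y) = \<bar>v \<bullet> y\<bar> / norm v"
    using nv by (simp add: proj_on_def power2_eq_square)
  also have "\<dots> \<le> norm v * norm y / norm v"
    using nv by (intro divide_right_mono Cauchy_Schwarz_ineq2) auto
  also have "\<dots> = norm y" using nv by simp
  finally show ?thesis .
qed

lemma norm_proj_perp_le: "norm (proj_perp v y) \<le> norm y"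
proof (cases "v = 0")
  case True
  then show ?thesis by (simp add: proj_perp_def proj_on_def)
next
  case False
  then have "orthogonal (proj_on v y) (proj_perp v y)"
    unfolding orthogonal_def proj_perp_def proj_on_def
    by (simp add: inner_diff_right power2_norm_eq_inner)
  then have "(norm y)\<^sup>2 = (norm (proj_on v y))\<^sup>2 + (norm (proj_perp v y))\<^sup>2"
    unfolding proj_perp_def by (metis norm_add_Pythagorean add.commute diff_add_cancel)
  then have "(norm (proj_perp v y))\<^sup>2 \<le> (norm y)\<^sup>2" by simp
  then show ?thesis by (rule power2_le_imp_le) simp
qed

lemma proj_on_inner_self: "v \<noteq> 0 \<Longrightarrow> proj_on v y \<bullet> v = y \<bullet> v"
  by (simp add: proj_on_def power2_norm_eq_inner inner_commute)

lemma proj_perp_orthogonal: "v \<bullet> y = 0 \<Longrightarrow> proj_perp v y = y"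
  by (simp add: proj_perp_def proj_on_def)

lemma isCont_proj_perp: "v0 \<noteq> 0 \<Longrightarrow> isCont (\<lambda>v. proj_perp v y) v0"
  unfolding proj_perp_def proj_on_def by (intro continuous_intros) auto

lemma borel_measurable_proj_on: "(\<lambda>v. proj_on v y) \<in> borel_measurable borel"
  unfolding proj_on_def by measurable

lemma borel_measurable_proj_perp: "(\<lambda>v. proj_perp v y) \<in> borel_measurable borel"
  unfolding proj_perp_def using borel_measurable_proj_on by measurable

lemma borel_measurable_ind_inner_nonneg [measurable]:
  fixes y :: "'a::euclidean_space"
  shows "(\<lambda>v. ind (v \<bullet> y \<ge> 0)) \<in> borel_measurable borel"
  unfolding ind_def by measurable

lemma prod_vec_nth_eq_prod_Basis:
  fixes g :: "real \<Rightarrow> 'b::comm_monoid_mult" and v :: "real ^ 'd"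
  shows "(\<Prod>k\<in>UNIV. g (v $ k)) = (\<Prod>b\<in>Basis. g (v \<bullet> b))"
proof -
  have Basis: "(Basis :: (real^'d) set) = (\<lambda>k. axis k 1) ` UNIV"
    by (auto simp: Basis_vec_def)
  have "inj (\<lambda>k::'d. axis k (1::real))"
    by (auto simp: inj_def axis_eq_axis)
  then show ?thesis
    unfolding Basis by (simp add: prod.reindex inner_axis)
qed

lemma sets_gaussian_vec [measurable_cong]: "sets (gaussian_vec \<alpha>) = sets borel"
  by (simp add: gaussian_vec_def)

lemma prob_space_gaussian_vec:
  assumes "\<alpha> > 0"
  shows "prob_space (gaussian_vec \<alpha> :: (real^'d) measure)"
proof (rule prob_spaceI)
  interpret normal: prob_space "density lborel (normal_density 0 \<alpha>)"
    using assms by (rule prob_space_normal_density)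
  have normal_total: "(\<integral>\<^sup>+t. ennreal (normal_density 0 \<alpha> t) \<partial>lborel) = 1"
    using normal.emeasure_space_1 by (simp add: emeasure_density)
  have "emeasure (gaussian_vec \<alpha> :: (real^'d) measure) (space (gaussian_vec \<alpha>))
      = (\<integral>\<^sup>+v. ennreal (\<Prod>k\<in>UNIV. normal_density 0 \<alpha> ((v::real^'d) $ k)) \<partial>lborel)"
    unfolding gaussian_vec_def by (simp add: emeasure_density)
  also have "\<dots> = (\<integral>\<^sup>+v. (\<Prod>b\<in>Basis. ennreal (normal_density 0 \<alpha> ((v::real^'d) \<bullet> b))) \<partial>lborel)"
    by (simp add: prod_vec_nth_eq_prod_Basis prod_ennreal)
  also have "\<dots> = (\<Prod>b\<in>(Basis::(real^'d) set). \<integral>\<^sup>+t. ennreal (normal_density 0 \<alpha> t) \<partial>lborel)"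
    by (subst nn_integral_lborel_prod) auto
  finally show "emeasure (gaussian_vec \<alpha> :: (real^'d) measure) (space (gaussian_vec \<alpha>)) = 1"
    by (simp add: normal_total)
qed

lemma AE_lborel_if_AE_gaussian_vec:
  assumes "\<alpha> > 0" "AE v in (gaussian_vec \<alpha> :: (real^'d) measure). P v"
  shows "AE v in lborel. P v"
proof -
  have "AE v in lborel. 0 < ennreal (\<Prod>k\<in>UNIV. normal_density 0 \<alpha> ((v::real^'d) $ k)) \<longrightarrow> P v"
    using assms(2) unfolding gaussian_vec_def by (subst (asm) AE_density) auto
  moreover have "0 < ennreal (\<Prod>k\<in>UNIV. normal_density 0 \<alpha> ((v::real^'d) $ k))" for v
    using assms(1) by (simp add: normal_density_pos prod_pos)
  ultimately show ?thesis by auto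
qed

lemma not_AE_lborel_notin_open:
  fixes W :: "'a::euclidean_space set"
  assumes "open W" "W \<noteq> {}"
  shows "\<not> (AE v in lborel. v \<notin> W)"
proof
  assume "AE v in lborel. v \<notin> W"
  then have "W \<in> null_sets lborel"
    using assms(1) by (subst AE_iff_null_sets) auto
  then have "negligible W"
    by (simp add: negligible_iff_null_sets null_sets_completionI)
  with open_not_negligible[OF assms] show False ..
qed

lemma integral_gaussian_vec_pos:
  fixes f :: "real^'d \<Rightarrow> real"
  assumes "\<alpha> > 0" "integrable (gaussian_vec \<alpha>) f" "\<And>v. 0 \<le> f v"
    and "open W" "W \<noteq> {}" "\<And>v. v \<in> W \<Longrightarrow> f v \<noteq> 0"
  shows "0 < (\<integral>v. f v \<partial>gaussian_vec \<alpha>)"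
proof -
  have "(\<integral>v. f v \<partial>gaussian_vec \<alpha>) \<noteq> 0"
  proof
    assume "(\<integral>v. f v \<partial>gaussian_vec \<alpha>) = 0"
    then have "AE v in gaussian_vec \<alpha>. f v = 0"
      using integral_nonneg_eq_0_iff_AE[OF assms(2)] assms(3) by simp
    then have "AE v in gaussian_vec \<alpha>. v \<notin> W"
      by eventually_elim (use assms(6) in auto)
    then have "AE v in lborel. v \<notin> W"
      by (rule AE_lborel_if_AE_gaussian_vec[OF assms(1)])
    with not_AE_lborel_notin_open[OF assms(4,5)] show False ..
  qed
  moreover have "0 \<le> (\<integral>v. f v \<partial>gaussian_vec \<alpha>)"
    using assms(3) by simp
  ultimately show ?thesis by linarith
qed

section \<open>Gram matrices of gated combinations\<close>

definition gated_comb ::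
    "(real^'d \<Rightarrow> real^'d \<Rightarrow> real^'d) \<Rightarrow> ('n::finite \<Rightarrow> real^'d) \<Rightarrow> real^'n \<Rightarrow> real^'d \<Rightarrow> real^'d"
  where "gated_comb P x c v = (\<Sum>i\<in>UNIV. (c$i * ind (v \<bullet> x i \<ge> 0)) *\<^sub>R P v (x i))"

lemma integrable_gated_gram_entry:
  fixes P :: "real^'d \<Rightarrow> real^'d \<Rightarrow> real^'d"
  assumes meas: "\<And>y. (\<lambda>v. P v y) \<in> borel_measurable borel"
    and bnd: "\<And>v y. norm (P v y) \<le> norm y"
    and "\<alpha> > 0"
  shows "integrable (gaussian_vec \<alpha>)
           (\<lambda>v. (P v y \<bullet> P v z) * ind (v \<bullet> y \<ge> 0) * ind (v \<bullet> z \<ge> 0))"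
proof -
  interpret prob_space "gaussian_vec \<alpha> :: (real^'d) measure"
    using \<open>\<alpha> > 0\<close> by (rule prob_space_gaussian_vec)
  have [measurable]: "(\<lambda>v. P v y) \<in> borel_measurable borel" for y
    by (rule meas)
  show ?thesis
  proof (rule integrable_const_bound[where B = "norm y * norm z"])
    have "\<bar>P v y \<bullet> P v z\<bar> \<le> norm y * norm z" for v
      by (rule order_trans[OF Cauchy_Schwarz_ineq2]) (intro mult_mono bnd; simp)
    then show "AE v in gaussian_vec \<alpha>.
        norm ((P v y \<bullet> P v z) * ind (v \<bullet> y \<ge> 0) * ind (v \<bullet> z \<ge> 0)) \<le> norm y * norm z"
      by (simp add: ind_def abs_mult)
    show "(\<lambda>v. (P v y \<bullet> P v z) * ind (v \<bullet> y \<ge> 0) * ind (v \<bullet> z \<ge> 0))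
        \<in> borel_measurable (gaussian_vec \<alpha>)"
      by measurable
  qed
qed

lemma inner_gated_comb_self:
  "gated_comb P x c v \<bullet> gated_comb P x c v
     = (\<Sum>i\<in>UNIV. \<Sum>j\<in>UNIV. c$i * c$j * ((P v (x i) \<bullet> P v (x j)) * ind (v \<bullet> x i \<ge> 0) * ind (v \<bullet> x j \<ge> 0)))"
  unfolding gated_comb_def inner_sum_left inner_sum_right
  by (intro sum.cong refl) (simp add: algebra_simps inner_commute)

lemma quadratic_form_gated_gram:
  fixes x :: "'n::finite \<Rightarrow> real^'d" and P :: "real^'d \<Rightarrow> real^'d \<Rightarrow> real^'d"
  assumes "\<And>i j. integrable M (\<lambda>v. (P v (x i) \<bullet> P v (x j)) * ind (v \<bullet> x i \<ge> 0) * ind (v \<bullet> x j \<ge> 0))"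
  shows "c \<bullet> ((\<chi> i j. \<integral>v. (P v (x i) \<bullet> P v (x j)) * ind (v \<bullet> x i \<ge> 0) * ind (v \<bullet> x j \<ge> 0) \<partial>M) *v c)
       = (\<integral>v. gated_comb P x c v \<bullet> gated_comb P x c v \<partial>M)"
proof -
  define f where "f i j = (\<lambda>v. (P v (x i) \<bullet> P v (x j)) * ind (v \<bullet> x i \<ge> 0) * ind (v \<bullet> x j \<ge> 0))" for i j
  have integrable_f: "integrable M (f i j)" for i j
    using assms by (simp add: f_def)
  have "c \<bullet> ((\<chi> i j. integral\<^sup>L M (f i j)) *v c) = (\<Sum>i\<in>UNIV. \<Sum>j\<in>UNIV. c$i * c$j * integral\<^sup>L M (f i j))"
    unfolding inner_vec_def matrix_vector_mult_def by (simp add: sum_distrib_left mult_ac)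
  also have "\<dots> = (\<integral>v. (\<Sum>i\<in>UNIV. \<Sum>j\<in>UNIV. c$i * c$j * f i j v) \<partial>M)"
    using integrable_f by simp
  also have "\<dots> = (\<integral>v. gated_comb P x c v \<bullet> gated_comb P x c v \<partial>M)"
    by (simp add: inner_gated_comb_self f_def)
  finally show ?thesis
    by (simp add: f_def)
qed

lemma transpose_symmetric_vec_lambda:
  assumes "\<And>i j. f i j = f j i"
  shows "transpose (\<chi> i j. f i j) = (\<chi> i j. f i j)"
  unfolding transpose_def vec_eq_iff using assms by simp

lemma strictly_pos_def_gaussian_gram:
  fixes x :: "'n::finite \<Rightarrow> real^'d" and P :: "real^'d \<Rightarrow> real^'d \<Rightarrow> real^'d"
  assumes meas: "\<And>y. (\<lambda>v. P v y) \<in> borel_measurable borel"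
    and bnd: "\<And>v y. norm (P v y) \<le> norm y"
    and alpha: "\<alpha> > 0"
    and nonzero: "\<And>c. c \<noteq> 0 \<Longrightarrow> \<exists>W. open W \<and> W \<noteq> {} \<and> (\<forall>v\<in>W. gated_comb P x c v \<noteq> 0)"
  shows "strictly_pos_def (\<chi> i j. \<integral>v. (P v (x i) \<bullet> P v (x j)) * ind (v \<bullet> x i \<ge> 0) * ind (v \<bullet> x j \<ge> 0)
           \<partial>gaussian_vec \<alpha>)"
    (is "strictly_pos_def ?M")
  unfolding strictly_pos_def_def
proof (intro conjI allI impI)
  have "(\<integral>v. (P v (x i) \<bullet> P v (x j)) * ind (v \<bullet> x i \<ge> 0) * ind (v \<bullet> x j \<ge> 0) \<partial>gaussian_vec \<alpha>)
      = (\<integral>v. (P v (x j) \<bullet> P v (x i)) * ind (v \<bullet> x j \<ge> 0) * ind (v \<bullet> x i \<ge> 0) \<partial>gaussian_vec \<alpha>)"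
    for i j
    by (intro Bochner_Integration.integral_cong refl) (simp add: inner_commute mult_ac)
  then show "transpose ?M = ?M"
    by (rule transpose_symmetric_vec_lambda)
next
  fix c :: "real^'n"
  assume "c \<noteq> 0"
  obtain W where W: "open W" "W \<noteq> {}" "\<And>v. v \<in> W \<Longrightarrow> gated_comb P x c v \<noteq> 0"
    using nonzero[OF \<open>c \<noteq> 0\<close>] by blast
  have integrable_entries: "integrable (gaussian_vec \<alpha>)
      (\<lambda>v. (P v (x i) \<bullet> P v (x j)) * ind (v \<bullet> x i \<ge> 0) * ind (v \<bullet> x j \<ge> 0))" for i j
    using meas bnd alpha by (rule integrable_gated_gram_entry[where P = P])
  then have "c \<bullet> (?M *v c) = (\<integral>v. gated_comb P x c v \<bullet> gated_comb P x c v \<partial>gaussian_vec \<alpha>)"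
    by (rule quadratic_form_gated_gram[where P = P and x = x])
  moreover have "0 < (\<integral>v. gated_comb P x c v \<bullet> gated_comb P x c v \<partial>gaussian_vec \<alpha>)"
  proof (rule integral_gaussian_vec_pos[OF alpha _ _ W(1,2)])
    show "integrable (gaussian_vec \<alpha>) (\<lambda>v. gated_comb P x c v \<bullet> gated_comb P x c v)"
      unfolding inner_gated_comb_self using integrable_entries by simp
  qed (use W(3) in auto)
  ultimately show "0 < c \<bullet> (?M *v c)"
    by simp
qed

section \<open>Non-vanishing near a hyperplane\<close>

lemma ex_orthogonal_nonorthogonal:
  fixes a b :: "'a::real_inner"
  assumes "a \<noteq> 0" "\<And>\<beta>. b \<noteq> \<beta> *\<^sub>R a"
  shows "\<exists>u. u \<bullet> a = 0 \<and> u \<bullet> b \<noteq> 0"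
proof -
  define u where "u = b - ((a \<bullet> b) / (a \<bullet> a)) *\<^sub>R a"
  have ua: "u \<bullet> a = 0"
    using assms(1) by (simp add: u_def inner_diff_left inner_commute[of b a])
  have "u \<noteq> 0"
    using assms(2) by (simp add: u_def)
  moreover have "u \<bullet> u = u \<bullet> b"
    by (subst (2) u_def) (simp add: inner_diff_right ua)
  ultimately have "u \<bullet> b \<noteq> 0"
    by (metis inner_eq_zero_iff)
  with ua show ?thesis by blast
qed

lemma ex_orthogonal_avoiding:
  fixes a :: "'a::real_inner"
  assumes "finite B" "\<And>b. b \<in> B \<Longrightarrow> \<exists>u. u \<bullet> a = 0 \<and> u \<bullet> b \<noteq> 0"
  shows "\<exists>v. v \<bullet> a = 0 \<and> (\<forall>b\<in>B. v \<bullet> b \<noteq> 0)"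
  using assms
proof (induction B rule: finite_induct)
  case empty
  show ?case by (intro exI[of _ 0]) simp
next
  case (insert b B)
  obtain v where v: "v \<bullet> a = 0" "\<forall>b\<in>B. v \<bullet> b \<noteq> 0"
    using insert.IH[OF insert.prems[OF insertI2]] by blast
  obtain u where u: "u \<bullet> a = 0" "u \<bullet> b \<noteq> 0"
    using insert.prems[OF insertI1] by blast
  \<comment> \<open>\<open>v + t u\<close> avoids every hyperplane except for finitely many values of \<open>t\<close>.\<close>
  let ?bad = "{0} \<union> (\<lambda>b'. - (v \<bullet> b') / (u \<bullet> b')) ` insert b B"
  have "finite ?bad"
    using insert(1) by simp
  then obtain t where t: "t \<notin> ?bad"
    using ex_new_if_finite[OF infinite_UNIV_char_0] by blast
  have "(v + t *\<^sub>R u) \<bullet> b' \<noteq> 0" if "b' \<in> insert b B" for b'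
  proof
    assume "(v + t *\<^sub>R u) \<bullet> b' = 0"
    then have e: "v \<bullet> b' + t * (u \<bullet> b') = 0" by (simp add: inner_add_left)
    show False
    proof (cases "u \<bullet> b' = 0")
      case True
      with e that u v show False by auto
    next
      case False
      with e have "t = - (v \<bullet> b') / (u \<bullet> b')" by (simp add: field_simps)
      with that t show False by auto
    qed
  qed
  moreover have "(v + t *\<^sub>R u) \<bullet> a = 0"
    using u v by (simp add: inner_add_left)
  ultimately show ?case by blast
qed

lemma ex_ball_half_space:
  fixes v0 a :: "'a::real_inner"
  assumes "v0 \<bullet> a = 0" "a \<noteq> 0" "r > 0"
  shows "\<exists>v\<in>ball v0 r. v \<bullet> a > 0"
proof
  define v where "v = v0 + (r / 2 / norm a) *\<^sub>R a"
  show "v \<in> ball v0 r"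
    using assms by (simp add: v_def dist_norm)
  show "v \<bullet> a > 0"
    using assms by (simp add: v_def inner_add_left power2_norm_eq_inner[symmetric] power2_eq_square)
qed

lemma open_ball_half_space: "open (ball v0 r \<inter> {v. v \<bullet> a > 0})"
  by (intro open_Int open_ball open_Collect_less continuous_intros)

lemma ex_open_nonorthogonal:
  fixes W :: "'a::euclidean_space set"
  assumes "open W" "W \<noteq> {}" "u \<noteq> 0"
  shows "\<exists>v\<in>W. u \<bullet> v \<noteq> 0"
proof (rule ccontr)
  assume "\<not> (\<exists>v\<in>W. u \<bullet> v \<noteq> 0)"
  then have "W \<subseteq> {v. u \<bullet> v = 0}" by auto
  then have "negligible W"
    using negligible_hyperplane[of u 0] assms(3) negligible_subset by blast
  with open_not_negligible[OF assms(1,2)] show False ..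
qed

lemma ex_hyperplane_point_fixing_other_signs:
  fixes x :: "'n::finite \<Rightarrow> real^'d"
  assumes dim: "CARD('d) \<ge> 2"
    and nz: "\<And>i. x i \<noteq> 0"
    and nonpar: "\<And>i j \<beta>. i \<noteq> j \<Longrightarrow> \<beta> \<noteq> 0 \<Longrightarrow> x i \<noteq> \<beta> *\<^sub>R x j"
  obtains v0 r where "v0 \<bullet> x i = 0" "r > 0" "0 \<notin> ball v0 r"
    "\<And>v j. v \<in> ball v0 r \<Longrightarrow> j \<noteq> i \<Longrightarrow> v \<bullet> x j \<ge> 0 \<longleftrightarrow> v0 \<bullet> x j \<ge> 0"
proof -
  obtain u0 where u0: "u0 \<noteq> 0" "orthogonal (x i) u0"
    using orthogonal_to_vector_exists[of "x i"] dim by auto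
  \<comment> \<open>\<open>u0\<close> is in \<open>B\<close> only to keep \<open>v0\<close> away from the origin.\<close>
  define B where "B = insert u0 (x ` (- {i}))"
  have "finite B"
    by (simp add: B_def)
  have separable: "\<exists>u. u \<bullet> x i = 0 \<and> u \<bullet> b \<noteq> 0" if b: "b \<in> B" for b
  proof (cases "b = u0")
    case True
    show ?thesis
      using u0 True by (intro exI[of _ u0]) (simp add: orthogonal_def inner_commute)
  next
    case False
    then obtain j where j: "j \<noteq> i" "b = x j"
      using b by (auto simp: B_def)
    have "x j \<noteq> \<beta> *\<^sub>R x i" for \<beta>
      using nonpar[OF j(1), of \<beta>] nz[of j] by (cases "\<beta> = 0") auto
    then show ?thesis
      unfolding j(2) by (rule ex_orthogonal_nonorthogonal[OF nz[of i]])
  qed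
  obtain v0 where v0: "v0 \<bullet> x i = 0" "\<And>b. b \<in> B \<Longrightarrow> v0 \<bullet> b \<noteq> 0"
    using ex_orthogonal_avoiding[OF \<open>finite B\<close> separable] by blast
  define U where "U = (\<Inter>b\<in>B. {v. 0 < (v \<bullet> b) * (v0 \<bullet> b)})"
  have "open U"
    unfolding U_def using \<open>finite B\<close> by (intro open_INT ballI open_Collect_less continuous_intros)
  moreover have "v0 \<in> U"
    unfolding U_def using v0(2) by (auto simp: zero_less_mult_iff linorder_neq_iff)
  ultimately obtain r where r: "r > 0" "ball v0 r \<subseteq> U"
    by (meson open_contains_ball)
  show ?thesis
  proof (rule that[OF v0(1) r(1)])
    show "0 \<notin> ball v0 r"
    proof
      assume "0 \<in> ball v0 r"
      with r(2) have "0 \<in> U" by blast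
      then show False
        by (simp add: U_def B_def)
    qed
    show "v \<bullet> x j \<ge> 0 \<longleftrightarrow> v0 \<bullet> x j \<ge> 0" if "v \<in> ball v0 r" "j \<noteq> i" for v j
    proof -
      have "x j \<in> B"
        using that(2) by (simp add: B_def)
      moreover have "v \<in> U"
        using that(1) r(2) by blast
      ultimately have "0 < (v \<bullet> x j) * (v0 \<bullet> x j)"
        unfolding U_def by blast
      then show ?thesis
        by (auto simp: zero_less_mult_iff)
    qed
  qed
qed

lemma gated_comb_split:
  assumes "\<And>j. j \<noteq> i \<Longrightarrow> v \<bullet> x j \<ge> 0 \<longleftrightarrow> v0 \<bullet> x j \<ge> 0"
  shows "gated_comb P x c v = (c$i * ind (v \<bullet> x i \<ge> 0)) *\<^sub>R P v (x i)
           + (\<Sum>j\<in>- {i}. (c$j * ind (v0 \<bullet> x j \<ge> 0)) *\<^sub>R P v (x j))"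
proof -
  have "gated_comb P x c v = (c$i * ind (v \<bullet> x i \<ge> 0)) *\<^sub>R P v (x i)
           + (\<Sum>j\<in>- {i}. (c$j * ind (v \<bullet> x j \<ge> 0)) *\<^sub>R P v (x j))"
    unfolding gated_comb_def by (subst sum.remove[of _ i]) (auto simp: Compl_eq_Diff_UNIV)
  also have "(\<Sum>j\<in>- {i}. (c$j * ind (v \<bullet> x j \<ge> 0)) *\<^sub>R P v (x j))
           = (\<Sum>j\<in>- {i}. (c$j * ind (v0 \<bullet> x j \<ge> 0)) *\<^sub>R P v (x j))"
    using assms by (intro sum.cong) auto
  finally show ?thesis .
qed

lemma ex_open_nonzero_side_continuous:
  fixes F H :: "'a::real_inner \<Rightarrow> 'b::real_normed_vector"
  assumes "v0 \<bullet> a = 0" "a \<noteq> 0" "r > 0"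
    and "\<And>v. v \<in> ball v0 r \<Longrightarrow> v \<bullet> a > 0 \<Longrightarrow> F v = H v"
    and "isCont H v0" "H v0 \<noteq> 0"
  shows "\<exists>W. open W \<and> W \<noteq> {} \<and> (\<forall>v\<in>W. F v \<noteq> 0)"
proof -
  obtain \<epsilon> where "\<epsilon> > 0" and H_nonzero: "\<And>v. dist v0 v < \<epsilon> \<Longrightarrow> H v \<noteq> 0"
    using continuous_at_avoid[OF assms(5,6)] by blast
  define \<delta> where "\<delta> = min \<epsilon> r"
  have "\<delta> > 0"
    using \<open>\<epsilon> > 0\<close> \<open>r > 0\<close> by (simp add: \<delta>_def)
  show ?thesis
  proof (intro exI conjI ballI)
    show "open (ball v0 \<delta> \<inter> {v. v \<bullet> a > 0})"
      by (rule open_ball_half_space)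
    show "ball v0 \<delta> \<inter> {v. v \<bullet> a > 0} \<noteq> {}"
      using ex_ball_half_space[OF assms(1,2) \<open>\<delta> > 0\<close>] by blast
    fix v
    assume "v \<in> ball v0 \<delta> \<inter> {v. v \<bullet> a > 0}"
    then show "F v \<noteq> 0"
      using assms(4) H_nonzero by (auto simp: \<delta>_def)
  qed
qed

lemma ex_open_nonzero_two_sided_continuous:
  fixes F H\<^sub>p H\<^sub>n :: "'a::real_inner \<Rightarrow> 'b::real_normed_vector"
  assumes "v0 \<bullet> a = 0" "a \<noteq> 0" "r > 0"
    and "\<And>v. v \<in> ball v0 r \<Longrightarrow> v \<bullet> a > 0 \<Longrightarrow> F v = H\<^sub>p v"
    and "\<And>v. v \<in> ball v0 r \<Longrightarrow> v \<bullet> a < 0 \<Longrightarrow> F v = H\<^sub>n v"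
    and "isCont H\<^sub>p v0" "isCont H\<^sub>n v0" "H\<^sub>p v0 \<noteq> H\<^sub>n v0"
  shows "\<exists>W. open W \<and> W \<noteq> {} \<and> (\<forall>v\<in>W. F v \<noteq> 0)"
proof (cases "H\<^sub>p v0 = 0")
  case True
  show ?thesis
    by (rule ex_open_nonzero_side_continuous[of v0 "- a" r F H\<^sub>n]) (use assms True in auto)
next
  case False
  show ?thesis
    by (rule ex_open_nonzero_side_continuous[of v0 a r F H\<^sub>p]) (use assms False in auto)
qed

lemma ex_open_nonzero_side_linear:
  fixes F :: "'a::euclidean_space \<Rightarrow> 'a"
  assumes "v0 \<bullet> a = 0" "a \<noteq> 0" "r > 0"
    and "\<And>v. v \<in> ball v0 r \<Longrightarrow> v \<bullet> a > 0 \<Longrightarrow> F v \<bullet> v = l \<bullet> v"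
    and "l \<noteq> 0"
  shows "\<exists>W. open W \<and> W \<noteq> {} \<and> (\<forall>v\<in>W. F v \<noteq> 0)"
proof (intro exI conjI ballI)
  let ?U = "ball v0 r \<inter> {v. v \<bullet> a > 0}"
  show "open (?U \<inter> {v. l \<bullet> v \<noteq> 0})"
    by (intro open_Int open_ball_half_space open_Collect_neq continuous_intros)
  have "open ?U" "?U \<noteq> {}"
    using open_ball_half_space ex_ball_half_space[OF assms(1-3)] by blast+
  then show "?U \<inter> {v. l \<bullet> v \<noteq> 0} \<noteq> {}"
    using ex_open_nonorthogonal[OF _ _ assms(5)] by blast
  fix v
  assume "v \<in> ?U \<inter> {v. l \<bullet> v \<noteq> 0}"
  then have "F v \<bullet> v \<noteq> 0"
    using assms(4) by auto
  then show "F v \<noteq> 0"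
    by auto
qed

lemma ex_open_nonzero_two_sided_linear:
  fixes F :: "'a::euclidean_space \<Rightarrow> 'a"
  assumes "v0 \<bullet> a = 0" "a \<noteq> 0" "r > 0"
    and "\<And>v. v \<in> ball v0 r \<Longrightarrow> v \<bullet> a > 0 \<Longrightarrow> F v \<bullet> v = l\<^sub>p \<bullet> v"
    and "\<And>v. v \<in> ball v0 r \<Longrightarrow> v \<bullet> a < 0 \<Longrightarrow> F v \<bullet> v = l\<^sub>n \<bullet> v"
    and "l\<^sub>p \<noteq> l\<^sub>n"
  shows "\<exists>W. open W \<and> W \<noteq> {} \<and> (\<forall>v\<in>W. F v \<noteq> 0)"
proof (cases "l\<^sub>p = 0")
  case True
  show ?thesis
    by (rule ex_open_nonzero_side_linear[of v0 "- a" r F l\<^sub>n]) (use assms True in auto)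
next
  case False
  show ?thesis
    by (rule ex_open_nonzero_side_linear[of v0 a r F l\<^sub>p]) (use assms False in auto)
qed

lemma ex_open_gated_comb_proj_perp_nonzero:
  fixes x :: "'n::finite \<Rightarrow> real^'d"
  assumes dim: "CARD('d) \<ge> 2"
    and nz: "\<And>i. x i \<noteq> 0"
    and nonpar: "\<And>i j \<beta>. i \<noteq> j \<Longrightarrow> \<beta> \<noteq> 0 \<Longrightarrow> x i \<noteq> \<beta> *\<^sub>R x j"
    and "c \<noteq> 0"
  shows "\<exists>W. open W \<and> W \<noteq> {} \<and> (\<forall>v\<in>W. gated_comb proj_perp x c v \<noteq> 0)"
proof -
  obtain i where ci: "c$i \<noteq> 0"
    using \<open>c \<noteq> 0\<close> by (metis vec_eq_iff zero_index)
  obtain v0 r where v0: "v0 \<bullet> x i = 0" and r: "r > 0" "0 \<notin> ball v0 r"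
    and signs: "\<And>v j. v \<in> ball v0 r \<Longrightarrow> j \<noteq> i \<Longrightarrow> v \<bullet> x j \<ge> 0 \<longleftrightarrow> v0 \<bullet> x j \<ge> 0"
    using ex_hyperplane_point_fixing_other_signs[where x = x and i = i, OF dim nz nonpar] by blast
  have "v0 \<noteq> 0"
    using r by auto
  define S where "S v = (\<Sum>j\<in>- {i}. (c$j * ind (v0 \<bullet> x j \<ge> 0)) *\<^sub>R proj_perp v (x j))" for v
  have split: "gated_comb proj_perp x c v = (c$i * ind (v \<bullet> x i \<ge> 0)) *\<^sub>R proj_perp v (x i) + S v"
    if "v \<in> ball v0 r" for v
    unfolding S_def using signs[OF that] by (rule gated_comb_split)
  show ?thesis
  proof (rule ex_open_nonzero_two_sided_continuous[OF v0 nz r(1)])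
    show "gated_comb proj_perp x c v = c$i *\<^sub>R proj_perp v (x i) + S v"
      if "v \<in> ball v0 r" "v \<bullet> x i > 0" for v
      using split[OF that(1)] that(2) by (simp add: ind_def)
    show "gated_comb proj_perp x c v = S v"
      if "v \<in> ball v0 r" "v \<bullet> x i < 0" for v
      using split[OF that(1)] that(2) by (simp add: ind_def)
    have "isCont (\<lambda>v. proj_perp v y) v0" for y
      using \<open>v0 \<noteq> 0\<close> by (rule isCont_proj_perp)
    then show "isCont S v0" "isCont (\<lambda>v. c$i *\<^sub>R proj_perp v (x i) + S v) v0"
      unfolding S_def by (intro continuous_intros; simp)+
    show "c$i *\<^sub>R proj_perp v0 (x i) + S v0 \<noteq> S v0"
      using ci nz[of i] v0 by (simp add: proj_perp_orthogonal)
  qed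
qed

lemma ex_open_gated_comb_proj_on_nonzero:
  fixes x :: "'n::finite \<Rightarrow> real^'d"
  assumes dim: "CARD('d) \<ge> 2"
    and nz: "\<And>i. x i \<noteq> 0"
    and nonpar: "\<And>i j \<beta>. i \<noteq> j \<Longrightarrow> \<beta> \<noteq> 0 \<Longrightarrow> x i \<noteq> \<beta> *\<^sub>R x j"
    and "c \<noteq> 0"
  shows "\<exists>W. open W \<and> W \<noteq> {} \<and> (\<forall>v\<in>W. gated_comb proj_on x c v \<noteq> 0)"
proof -
  obtain i where ci: "c$i \<noteq> 0"
    using \<open>c \<noteq> 0\<close> by (metis vec_eq_iff zero_index)
  obtain v0 r where v0: "v0 \<bullet> x i = 0" and r: "r > 0" "0 \<notin> ball v0 r"
    and signs: "\<And>v j. v \<in> ball v0 r \<Longrightarrow> j \<noteq> i \<Longrightarrow> v \<bullet> x j \<ge> 0 \<longleftrightarrow> v0 \<bullet> x j \<ge> 0"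
    using ex_hyperplane_point_fixing_other_signs[where x = x and i = i, OF dim nz nonpar] by blast
  define w where "w = (\<Sum>j\<in>- {i}. (c$j * ind (v0 \<bullet> x j \<ge> 0)) *\<^sub>R x j)"
  have split: "gated_comb proj_on x c v \<bullet> v = c$i * ind (v \<bullet> x i \<ge> 0) * (x i \<bullet> v) + w \<bullet> v"
    if "v \<in> ball v0 r" for v
  proof -
    have "v \<noteq> 0"
      using that r(2) by auto
    have "gated_comb proj_on x c v = (c$i * ind (v \<bullet> x i \<ge> 0)) *\<^sub>R proj_on v (x i)
        + (\<Sum>j\<in>- {i}. (c$j * ind (v0 \<bullet> x j \<ge> 0)) *\<^sub>R proj_on v (x j))"
      using signs[OF that] by (rule gated_comb_split)
    then show ?thesis
      using \<open>v \<noteq> 0\<close> by (simp add: w_def inner_add_left inner_sum_left proj_on_inner_self)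
  qed
  show ?thesis
  proof (rule ex_open_nonzero_two_sided_linear[OF v0 nz r(1)])
    show "gated_comb proj_on x c v \<bullet> v = (c$i *\<^sub>R x i + w) \<bullet> v"
      if "v \<in> ball v0 r" "v \<bullet> x i > 0" for v
      using split[OF that(1)] that(2) by (simp add: ind_def inner_add_left)
    show "gated_comb proj_on x c v \<bullet> v = w \<bullet> v"
      if "v \<in> ball v0 r" "v \<bullet> x i < 0" for v
      using split[OF that(1)] that(2) by (simp add: ind_def)
    show "c$i *\<^sub>R x i + w \<noteq> w"
      using ci nz[of i] by simp
  qed
qed

theorem lemma4p1:
  fixes x :: "'n::finite \<Rightarrow> real ^ 'd" and y :: "'n \<Rightarrow> real" and \<alpha> :: real
  assumes dim: "CARD('d) \<ge> 2"
    and nz: "\<And>i. x i \<noteq> 0"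
    and bnd: "\<And>i. norm (x i) \<le> 1"
    and nonpar: "\<And>i j \<beta>. i \<noteq> j \<Longrightarrow> \<beta> \<noteq> 0 \<Longrightarrow> x i \<noteq> \<beta> *\<^sub>R x j"
    and alpha: "\<alpha> > 0"
  shows "strictly_pos_def (V_inf \<alpha> x) \<and> strictly_pos_def (G_inf \<alpha> x)"
proof
  show "strictly_pos_def (V_inf \<alpha> x)"
    unfolding V_inf_def
    using borel_measurable_proj_perp norm_proj_perp_le alpha
      ex_open_gated_comb_proj_perp_nonzero[where x = x, OF dim nz nonpar]
    by (rule strictly_pos_def_gaussian_gram)
  show "strictly_pos_def (G_inf \<alpha> x)"
    unfolding G_inf_def
    using borel_measurable_proj_on norm_proj_on_le alpha
      ex_open_gated_comb_proj_on_nonzero[where x = x, OF dim nz nonpar]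
    by (rule strictly_pos_def_gaussian_gram)
qed

end
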